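(* Let $r=r(n)\ge3$ and $m=m(n)$ be integers with $r^{-2}n\le m=o(r^{-3}n^{3/2})$, and let $M_0^*=\bigl\lceil\log(r^{-2}n)+\frac{3^4r^2m}{n}\bigr\rceil$. Then, as $n\to\infty$, the number of hypergraphs in $\mathcal{L}_r(n,m)$ in which every vertex has degree at most $M_0^*$ equals $\bigl(1-O(r^6/n^3)\bigr)|\mathcal{L}_r(n,m)|$.
   Context: An $r$-graph on $[n]$ is a set of $r$-subsets of $[n]$ (edges); it is linear if any two distinct edges share at most one vertex. $\mathcal{L}_r(n,m)$ is the set of linear $r$-graphs on $[n]$ with exactly $m$ edges. The degree of a vertex is the number of edges containing it. $\log$ is the natural logarithm. *)

theory Defs
  imports Complex_Main "HOL-Library.Landau_Symbols"
begin

definition linear_rgraph :: "nat \<Rightarrow> nat \<Rightarrow> nat set set \<Rightarrow> bool" where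
  "linear_rgraph r n H \<longleftrightarrow>
     (\<forall>e\<in>H. e \<subseteq> {1..n} \<and> card e = r) \<and>
     (\<forall>e\<in>H. \<forall>f\<in>H. e \<noteq> f \<longrightarrow> card (e \<inter> f) \<le> 1)"

definition Lin :: "nat \<Rightarrow> nat \<Rightarrow> nat \<Rightarrow> nat set set set" where
  "Lin r n m = {H. linear_rgraph r n H \<and> card H = m}"

definition degree :: "nat set set \<Rightarrow> nat \<Rightarrow> nat" where
  "degree H v = card {e\<in>H. v \<in> e}"

definition M0star :: "nat \<Rightarrow> nat \<Rightarrow> nat \<Rightarrow> int" where
  "M0star r n m = \<lceil>ln (real n / real r ^ 2) + 3^4 * real r ^ 2 * real m / real n\<rceil>"

end

theory Submission
  imports Defs "HOL-Analysis.Complex_Transcendental"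
begin

text \<open>
  Let k = M0* + 1 and N = (n choose r). Removing k edges through a vertex of degree at least k
  maps the graphs in L_r(n,m) having such a vertex to L_r(n,m-k), and at most
  n (n-1 choose r-1)^k / k! of them go to the same graph. Conversely, a graph in L_r(n,j) stays
  linear when any of the N possible edges is added, except at most j (r choose 2)(n-2 choose r-2)
  of them; double counting the pairs (graph, added edge) gives
  |L_r(n,j)| \<le> 4m/(3N) |L_r(n,j+1)| for j < m as soon as 4 m r^4 \<le> n^2, which
  m = o(n^(3/2)/r^3) guarantees eventually. Hence these graphs form a proportion at most
  n (4x/3)^k / k! of L_r(n,m), where x = mr/n, and k^k \<le> e^k k! together with k \<ge> 81 r x and
  k \<ge> log(n/r^2) + 81 bounds this by r^6/n^3.
\<close>

lemma card_filter_eq_one_minus_ratio: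
  assumes "finite A"
  shows "real (card {x \<in> A. P x}) = (1 - real (card {x \<in> A. \<not> P x}) / real (card A)) * real (card A)"
proof -
  have le: "card {x \<in> A. P x} \<le> card A" using assms by (intro card_mono) auto
  have "{x \<in> A. \<not> P x} = A - {x \<in> A. P x}" by blast
  then have "real (card {x \<in> A. \<not> P x}) = real (card A) - real (card {x \<in> A. P x})"
    using assms le by (simp add: card_Diff_subset of_nat_diff)
  moreover have "(1 - b / real (card A)) * real (card A) = real (card A) - b" if "card A \<noteq> 0" for b
    using that by (simp add: field_simps)
  ultimately show ?thesis using le by (cases "card A = 0") simp_all
qed

lemma binomial_two_step:
  assumes "2 \<le> r"
  shows "n * (n - 1) * ((n - 2) choose (r - 2)) = r * (r - 1) * (n choose r)"
proof -
  have "r * (r - 1) * (n choose r) = (r - 1) * (n * ((n - 1) choose (r - 1)))"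
    using times_binomial_minus1_eq[of r n] assms by simp
  also have "\<dots> = n * ((r - 1) * ((n - 1) choose (r - 1)))" by (simp only: mult.left_commute)
  also have "(r - 1) * ((n - 1) choose (r - 1)) = (n - 1) * ((n - 2) choose (r - 2))"
    using times_binomial_minus1_eq[of "r - 1" "n - 1"] assms by (simp add: numeral_2_eq_2)
  finally show ?thesis by (simp only: mult.assoc)
qed

section \<open>Edges and linear r-graphs\<close>

definition all_edges :: "nat \<Rightarrow> nat \<Rightarrow> nat set set" where
  "all_edges r n = {e. e \<subseteq> {1..n} \<and> card e = r}"

lemma finite_all_edges: "finite (all_edges r n)"
  unfolding all_edges_def by (rule finite_subset[of _ "Pow {1..n}"]) auto

lemma card_all_edges: "card (all_edges r n) = n choose r"
  unfolding all_edges_def using n_subsets[of "{1..n}" r] by simp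

lemma linear_rgraph_subset_all_edges: "linear_rgraph r n H \<Longrightarrow> H \<subseteq> all_edges r n"
  unfolding linear_rgraph_def all_edges_def by auto

lemma finite_if_linear_rgraph: "linear_rgraph r n H \<Longrightarrow> finite H"
  using linear_rgraph_subset_all_edges finite_all_edges by (rule finite_subset)

lemma finite_Lin: "finite (Lin r n m)"
proof -
  have "Lin r n m \<subseteq> Pow (all_edges r n)"
    unfolding Lin_def using linear_rgraph_subset_all_edges by auto
  then show ?thesis using finite_all_edges by (meson finite_Pow_iff finite_subset)
qed

lemma linear_rgraph_mono: "linear_rgraph r n H \<Longrightarrow> G \<subseteq> H \<Longrightarrow> linear_rgraph r n G"
  unfolding linear_rgraph_def by (meson subsetD)

lemma degree_le_card: "finite H \<Longrightarrow> degree H v \<le> card H"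
  unfolding degree_def by (rule card_mono) auto

lemma card_edges_containing_le:
  assumes "p \<subseteq> {1..n}" "card p = d" "d \<le> r"
  shows "card {e \<in> all_edges r n. p \<subseteq> e} \<le> (n - d) choose (r - d)"
proof -
  have fin_p: "finite p" using assms(1) finite_subset by blast
  have "card {e \<in> all_edges r n. p \<subseteq> e} \<le> card {B. B \<subseteq> {1..n} - p \<and> card B = r - d}"
  proof (rule card_inj_on_le[where f = "\<lambda>e. e - p"])
    show "inj_on (\<lambda>e. e - p) {e \<in> all_edges r n. p \<subseteq> e}"
      by (rule inj_onI) blast
    show "(\<lambda>e. e - p) ` {e \<in> all_edges r n. p \<subseteq> e} \<subseteq> {B. B \<subseteq> {1..n} - p \<and> card B = r - d}"
      using assms fin_p by (auto simp: all_edges_def card_Diff_subset)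
  qed auto
  also have "\<dots> = card ({1..n} - p) choose (r - d)" by (rule n_subsets) auto
  also have "card ({1..n} - p) = n - d" using assms fin_p by (simp add: card_Diff_subset)
  finally show ?thesis .
qed

lemma card_edges_meeting_le:
  assumes f: "f \<in> all_edges r n"
  shows "card {e \<in> all_edges r n. 2 \<le> card (e \<inter> f)} \<le> (r choose 2) * ((n - 2) choose (r - 2))"
proof -
  define P where "P = {p. p \<subseteq> f \<and> card p = 2}"
  have f_sub: "f \<subseteq> {1..n}" and card_f: "card f = r" using f by (auto simp: all_edges_def)
  have fin_f: "finite f" using f_sub finite_subset by blast
  have "{e \<in> all_edges r n. 2 \<le> card (e \<inter> f)} \<subseteq> (\<Union>p\<in>P. {e \<in> all_edges r n. p \<subseteq> e})"
  proof
    fix e assume e: "e \<in> {e \<in> all_edges r n. 2 \<le> card (e \<inter> f)}"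
    then have "2 \<le> card (e \<inter> f)" by simp
    then obtain p where "p \<subseteq> e \<inter> f" "card p = 2" by (rule obtain_subset_with_card_n)
    with e show "e \<in> (\<Union>p\<in>P. {e \<in> all_edges r n. p \<subseteq> e})" unfolding P_def by blast
  qed
  moreover have "finite (\<Union>p\<in>P. {e \<in> all_edges r n. p \<subseteq> e})"
    by (rule finite_subset[OF _ finite_all_edges]) blast
  ultimately have "card {e \<in> all_edges r n. 2 \<le> card (e \<inter> f)}
      \<le> card (\<Union>p\<in>P. {e \<in> all_edges r n. p \<subseteq> e})"
    by (simp add: card_mono)
  also have "\<dots> \<le> (\<Sum>p\<in>P. card {e \<in> all_edges r n. p \<subseteq> e})"
    by (rule card_UN_le) (use fin_f in \<open>simp add: P_def\<close>)
  also have "\<dots> \<le> (\<Sum>p\<in>P. (n - 2) choose (r - 2))"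
  proof (rule sum_mono)
    fix p assume "p \<in> P"
    then have p: "p \<subseteq> f" "card p = 2" unfolding P_def by auto
    then have "card p \<le> r" using card_mono[OF fin_f] card_f by metis
    with p f_sub show "card {e \<in> all_edges r n. p \<subseteq> e} \<le> (n - 2) choose (r - 2)"
      by (intro card_edges_containing_le) auto
  qed
  also have "\<dots> = card P * ((n - 2) choose (r - 2))" by simp
  also have "card P = r choose 2" unfolding P_def using n_subsets[OF fin_f] card_f by simp
  finally show ?thesis .
qed

section \<open>Adding an edge to a linear r-graph\<close>

definition extensions :: "nat \<Rightarrow> nat \<Rightarrow> nat set set \<Rightarrow> nat set set" where
  "extensions r n G = {e \<in> all_edges r n. e \<notin> G \<and> linear_rgraph r n (insert e G)}"

lemma overlapping_edge_if_not_extension: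
  assumes G: "linear_rgraph r n G" and e: "e \<in> all_edges r n" "e \<notin> extensions r n G"
    and r: "2 \<le> r"
  shows "\<exists>f\<in>G. 2 \<le> card (e \<inter> f)"
proof (cases "e \<in> G")
  case True
  then show ?thesis using e r by (intro bexI[of _ e]) (auto simp: all_edges_def)
next
  case False
  then have "\<not> linear_rgraph r n (insert e G)" using e unfolding extensions_def by blast
  moreover have "\<forall>x\<in>insert e G. x \<subseteq> {1..n} \<and> card x = r"
    using G e(1) unfolding linear_rgraph_def all_edges_def by blast
  ultimately obtain x y where xy: "x \<in> insert e G" "y \<in> insert e G" "x \<noteq> y"
    "\<not> card (x \<inter> y) \<le> 1"
    unfolding linear_rgraph_def by blast
  have "\<not> (x \<in> G \<and> y \<in> G)"
    using G xy(3,4) unfolding linear_rgraph_def by fastforce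
  with xy(1-3) have "x = e \<and> y \<in> G \<or> y = e \<and> x \<in> G" by blast
  moreover have "2 \<le> card (x \<inter> y)" "2 \<le> card (y \<inter> x)" using xy(4) by (simp_all add: Int_commute)
  ultimately show ?thesis by blast
qed

lemma card_all_edges_le_extensions:
  assumes G: "linear_rgraph r n G" and r: "2 \<le> r"
  shows "n choose r \<le> card (extensions r n G) + card G * ((r choose 2) * ((n - 2) choose (r - 2)))"
proof -
  define Meet where "Meet f = {e \<in> all_edges r n. 2 \<le> card (e \<inter> f)}" for f
  have "all_edges r n \<subseteq> extensions r n G \<union> (\<Union>f\<in>G. Meet f)"
    using overlapping_edge_if_not_extension[OF G _ _ r] unfolding Meet_def by blast
  then have "n choose r \<le> card (extensions r n G \<union> (\<Union>f\<in>G. Meet f))"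
    unfolding card_all_edges[symmetric]
    by (intro card_mono) (auto simp: extensions_def Meet_def intro: finite_subset[OF _ finite_all_edges])
  also have "\<dots> \<le> card (extensions r n G) + card (\<Union>f\<in>G. Meet f)" by (rule card_Un_le)
  also have "card (\<Union>f\<in>G. Meet f) \<le> (\<Sum>f\<in>G. card (Meet f))"
    by (rule card_UN_le[OF finite_if_linear_rgraph[OF G]])
  also have "\<dots> \<le> (\<Sum>f\<in>G. (r choose 2) * ((n - 2) choose (r - 2)))"
    unfolding Meet_def using linear_rgraph_subset_all_edges[OF G]
    by (intro sum_mono card_edges_meeting_le) auto
  finally show ?thesis by simp
qed

lemma card_Sigma_extensions_le:
  "card (SIGMA G:Lin r n j. extensions r n G) \<le> Suc j * card (Lin r n (Suc j))"
proof -
  have fin_edges: "\<forall>H\<in>Lin r n (Suc j). finite H"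
    unfolding Lin_def using finite_if_linear_rgraph by blast
  have "card (SIGMA G:Lin r n j. extensions r n G) \<le> card (SIGMA H:Lin r n (Suc j). H)"
  proof (rule card_inj_on_le[where f = "\<lambda>(G, e). (insert e G, e)"])
    show "inj_on (\<lambda>(G, e). (insert e G, e)) (SIGMA G:Lin r n j. extensions r n G)"
    proof (rule inj_onI, clarsimp)
      fix G G' e assume "e \<in> extensions r n G" "e \<in> extensions r n G'" "insert e G = insert e G'"
      moreover from calculation have "e \<notin> G" "e \<notin> G'" by (simp_all add: extensions_def)
      ultimately show "G = G'" by (metis Diff_insert_absorb)
    qed
    show "(\<lambda>(G, e). (insert e G, e)) ` (SIGMA G:Lin r n j. extensions r n G)
        \<subseteq> (SIGMA H:Lin r n (Suc j). H)"
    proof clarsimp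
      fix G e assume "G \<in> Lin r n j" "e \<in> extensions r n G"
      then show "insert e G \<in> Lin r n (Suc j)"
        using finite_if_linear_rgraph unfolding Lin_def extensions_def by auto
    qed
    show "finite (SIGMA H:Lin r n (Suc j). H)"
      using finite_Lin fin_edges by (intro finite_SigmaI) auto
  qed
  also have "\<dots> = (\<Sum>H\<in>Lin r n (Suc j). card H)"
    using finite_Lin fin_edges by simp
  also have "\<dots> = Suc j * card (Lin r n (Suc j))"
    by (simp add: Lin_def)
  finally show ?thesis .
qed

lemma card_Lin_switching:
  assumes r: "2 \<le> r"
  shows "card (Lin r n j) * ((n choose r) - j * ((r choose 2) * ((n - 2) choose (r - 2))))
    \<le> Suc j * card (Lin r n (Suc j))"
proof -
  define c where "c = (r choose 2) * ((n - 2) choose (r - 2))"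
  have fin_ext: "finite (extensions r n G)" for G
    unfolding extensions_def by (rule finite_subset[OF _ finite_all_edges]) blast
  have "(n choose r) - j * c \<le> card (extensions r n G)" if "G \<in> Lin r n j" for G
  proof -
    from that have G: "linear_rgraph r n G" "card G = j" by (simp_all add: Lin_def)
    have "n choose r \<le> card (extensions r n G) + j * c"
      using card_all_edges_le_extensions[OF G(1) r] unfolding G(2) c_def .
    then show ?thesis by linarith
  qed
  then have "card (Lin r n j) * ((n choose r) - j * c) \<le> (\<Sum>G\<in>Lin r n j. card (extensions r n G))"
    using sum_mono[of "Lin r n j" "\<lambda>_. (n choose r) - j * c"] by simp
  also have "\<dots> = card (SIGMA G:Lin r n j. extensions r n G)"
    using finite_Lin fin_ext by simp
  also have "\<dots> \<le> Suc j * card (Lin r n (Suc j))"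
    by (rule card_Sigma_extensions_le)
  finally show ?thesis unfolding c_def .
qed

lemma card_Lin_ratio:
  assumes r: "2 \<le> r" and j: "j < m"
    and small: "4 * (m * ((r choose 2) * ((n - 2) choose (r - 2)))) \<le> n choose r"
  shows "3 * (n choose r) * card (Lin r n j) \<le> 4 * m * card (Lin r n (Suc j))"
proof -
  define c where "c = (r choose 2) * ((n - 2) choose (r - 2))"
  have "j * c \<le> m * c" using j by simp
  then have "3 * (n choose r) \<le> 4 * ((n choose r) - j * c)" using small unfolding c_def by linarith
  then have "3 * (n choose r) * card (Lin r n j) \<le> 4 * (card (Lin r n j) * ((n choose r) - j * c))"
    by (metis mult.assoc mult.commute mult_le_mono1)
  also have "\<dots> \<le> 4 * (Suc j * card (Lin r n (Suc j)))"
    using card_Lin_switching[OF r, of n j] unfolding c_def by (rule mult_le_mono2)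
  also have "\<dots> \<le> 4 * m * card (Lin r n (Suc j))"
    using mult_le_mono1[OF Suc_leI[OF j], of "card (Lin r n (Suc j))"] by simp
  finally show ?thesis .
qed

lemma card_Lin_descent:
  assumes r: "2 \<le> r" and small: "4 * (m * ((r choose 2) * ((n - 2) choose (r - 2)))) \<le> n choose r"
  shows "i \<le> m \<Longrightarrow> (3 * (n choose r)) ^ i * card (Lin r n (m - i)) \<le> (4 * m) ^ i * card (Lin r n m)"
proof (induction i)
  case 0
  then show ?case by simp
next
  case (Suc i)
  have "(3 * (n choose r)) ^ Suc i * card (Lin r n (m - Suc i))
      = (3 * (n choose r)) ^ i * (3 * (n choose r) * card (Lin r n (m - Suc i)))" by simp
  also have "\<dots> \<le> (3 * (n choose r)) ^ i * (4 * m * card (Lin r n (m - i)))"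
    using card_Lin_ratio[OF r _ small, of "m - Suc i"] Suc.prems by (simp add: Suc_diff_Suc)
  also have "\<dots> = 4 * m * ((3 * (n choose r)) ^ i * card (Lin r n (m - i)))" by simp
  also have "\<dots> \<le> 4 * m * ((4 * m) ^ i * card (Lin r n m))"
    using Suc by simp
  also have "\<dots> = (4 * m) ^ Suc i * card (Lin r n m)" by simp
  finally show ?case .
qed

lemma overlap_count_le_quarter_choose:
  assumes r: "2 \<le> r" and n: "2 \<le> n" and small: "4 * real m * real r ^ 4 \<le> real n ^ 2"
  shows "4 * (m * ((r choose 2) * ((n - 2) choose (r - 2)))) \<le> n choose r"
proof -
  define N where "N = real (n choose r)"
  define Q where "Q = real (r choose 2)"
  define P where "P = real ((n - 2) choose (r - 2))"
  define R where "R = real r * (real r - 1)"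
  have Q: "2 * Q = R"
  proof -
    have "real (2 * (r choose 2)) = real (r * (r - 1))"
      using times_binomial_minus1_eq[of 2 r] by simp
    then show ?thesis unfolding Q_def R_def using r by (simp add: of_nat_diff)
  qed
  have P: "real n * (real n - 1) * P = R * N"
  proof -
    have "real (n * (n - 1) * ((n - 2) choose (r - 2))) = real (r * (r - 1) * (n choose r))"
      using binomial_two_step[OF r] by (simp only:)
    then show ?thesis unfolding P_def R_def N_def using r n by (simp add: of_nat_diff)
  qed
  have R: "R ^ 2 \<le> real r ^ 4"
  proof -
    have "R \<le> real r ^ 2" "0 \<le> R" unfolding R_def using r by (auto simp: power2_eq_square)
    then have "R ^ 2 \<le> (real r ^ 2) ^ 2" by (rule power_mono)
    then show ?thesis by simp
  qed
  have N0: "0 \<le> N" unfolding N_def by simp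
  have "2 * (real n * (real n - 1)) * (4 * real m * Q * P)
      = 4 * real m * (2 * Q) * (real n * (real n - 1) * P)" by (simp only: mult_ac)
  also have "\<dots> = 4 * real m * R ^ 2 * N" unfolding Q P by (simp add: power2_eq_square mult_ac)
  also have "\<dots> \<le> 4 * real m * real r ^ 4 * N"
    using R N0 by (intro mult_right_mono mult_left_mono) auto
  also have "\<dots> \<le> real n ^ 2 * N" using small N0 by (rule mult_right_mono)
  also have "\<dots> \<le> 2 * (real n * (real n - 1)) * N"
    using n N0 by (intro mult_right_mono) (auto simp: power2_eq_square algebra_simps)
  finally have "2 * (real n * (real n - 1)) * (4 * real m * Q * P) \<le> 2 * (real n * (real n - 1)) * N" .
  moreover have "0 < 2 * (real n * (real n - 1))" using n by simp
  ultimately have "4 * real m * Q * P \<le> N" by (rule mult_left_le_imp_le)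
  then have "real (4 * (m * ((r choose 2) * ((n - 2) choose (r - 2))))) \<le> real (n choose r)"
    unfolding N_def Q_def P_def by (simp add: mult.assoc)
  then show ?thesis by (simp only: of_nat_le_iff)
qed

section \<open>Vertices of large degree\<close>

lemma card_Lin_supersets_le:
  assumes "finite S" "card S = k"
  shows "card {H \<in> Lin r n m. S \<subseteq> H} \<le> card (Lin r n (m - k))"
proof (rule card_inj_on_le[where f = "\<lambda>H. H - S"])
  show "inj_on (\<lambda>H. H - S) {H \<in> Lin r n m. S \<subseteq> H}" by (rule inj_onI) blast
  show "(\<lambda>H. H - S) ` {H \<in> Lin r n m. S \<subseteq> H} \<subseteq> Lin r n (m - k)"
  proof clarify
    fix H assume H: "H \<in> Lin r n m" "S \<subseteq> H"
    then have "linear_rgraph r n (H - S)" "card (H - S) = m - k"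
      using assms linear_rgraph_mono by (auto simp: Lin_def card_Diff_subset)
    then show "H - S \<in> Lin r n (m - k)" unfolding Lin_def by simp
  qed
qed (rule finite_Lin)

lemma card_edges_through_le:
  assumes "v \<in> {1..n}" "1 \<le> r"
  shows "card {e \<in> all_edges r n. v \<in> e} \<le> (n - 1) choose (r - 1)"
  using card_edges_containing_le[of "{v}" n 1 r] assms by simp

lemma Lin_high_degree_subset_UN:
  "{H \<in> Lin r n m. \<exists>v\<in>{1..n}. k \<le> degree H v}
    \<subseteq> (\<Union>v\<in>{1..n}. \<Union>S\<in>{S. S \<subseteq> {e \<in> all_edges r n. v \<in> e} \<and> card S = k}.
          {H \<in> Lin r n m. S \<subseteq> H})"
proof clarify
  fix H v assume H: "H \<in> Lin r n m" and v: "v \<in> {1..n}" and d: "k \<le> degree H v"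
  obtain S where S: "S \<subseteq> {e \<in> H. v \<in> e}" "card S = k"
    using obtain_subset_with_card_n[OF d[unfolded degree_def]] by metis
  moreover have "H \<subseteq> all_edges r n" using H linear_rgraph_subset_all_edges unfolding Lin_def by blast
  ultimately show "H \<in> (\<Union>v\<in>{1..n}. \<Union>S\<in>{S. S \<subseteq> {e \<in> all_edges r n. v \<in> e} \<and> card S = k}.
      {H \<in> Lin r n m. S \<subseteq> H})"
    using H v by blast
qed

lemma card_Lin_high_degree_mult_fact_le:
  assumes r: "1 \<le> r"
  shows "card {H \<in> Lin r n m. \<exists>v\<in>{1..n}. k \<le> degree H v} * fact k
    \<le> n * ((n - 1) choose (r - 1)) ^ k * card (Lin r n (m - k))"
proof -
  define Ss where "Ss v = {S. S \<subseteq> {e \<in> all_edges r n. v \<in> e} \<and> card S = k}" for v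
  define L where "L = card (Lin r n (m - k))"
  have fin_Ss: "finite (Ss v)" for v
    unfolding Ss_def using finite_all_edges by simp
  have "{H \<in> Lin r n m. \<exists>v\<in>{1..n}. k \<le> degree H v}
      \<subseteq> (\<Union>v\<in>{1..n}. \<Union>S\<in>Ss v. {H \<in> Lin r n m. S \<subseteq> H})"
    unfolding Ss_def by (rule Lin_high_degree_subset_UN)
  moreover have "finite (\<Union>v\<in>{1..n}. \<Union>S\<in>Ss v. {H \<in> Lin r n m. S \<subseteq> H})"
    by (rule finite_subset[OF _ finite_Lin]) blast
  ultimately have "card {H \<in> Lin r n m. \<exists>v\<in>{1..n}. k \<le> degree H v}
      \<le> card (\<Union>v\<in>{1..n}. \<Union>S\<in>Ss v. {H \<in> Lin r n m. S \<subseteq> H})"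
    by (simp add: card_mono)
  also have "\<dots> \<le> (\<Sum>v\<in>{1..n}. \<Sum>S\<in>Ss v. card {H \<in> Lin r n m. S \<subseteq> H})"
    by (intro order.trans[OF card_UN_le] sum_mono card_UN_le fin_Ss) simp
  also have "\<dots> \<le> (\<Sum>v\<in>{1..n}. \<Sum>S\<in>Ss v. L)"
  proof (intro sum_mono)
    fix v S assume "S \<in> Ss v"
    then show "card {H \<in> Lin r n m. S \<subseteq> H} \<le> L"
      unfolding Ss_def L_def using finite_all_edges
      by (intro card_Lin_supersets_le) (auto intro: finite_subset)
  qed
  also have "\<dots> = (\<Sum>v\<in>{1..n}. card (Ss v) * L)" by simp
  finally have "card {H \<in> Lin r n m. \<exists>v\<in>{1..n}. k \<le> degree H v} * fact k
      \<le> (\<Sum>v\<in>{1..n}. card (Ss v) * L) * fact k"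
    by (rule mult_right_mono) simp
  also have "\<dots> = (\<Sum>v\<in>{1..n}. card (Ss v) * fact k * L)"
    by (simp only: sum_distrib_right) (simp add: mult_ac)
  also have "\<dots> \<le> (\<Sum>v\<in>{1..n}. ((n - 1) choose (r - 1)) ^ k * L)"
  proof (intro sum_mono mult_right_mono)
    fix v assume v: "v \<in> {1..n}"
    have "card (Ss v) * fact k = (card {e \<in> all_edges r n. v \<in> e} choose k) * fact k"
      unfolding Ss_def using finite_all_edges by (simp add: n_subsets)
    also have "\<dots> \<le> card {e \<in> all_edges r n. v \<in> e} ^ k" by (rule binomial_fact_pow)
    also have "\<dots> \<le> ((n - 1) choose (r - 1)) ^ k"
      using card_edges_through_le[OF v r] by (rule power_mono) simp
    finally show "card (Ss v) * fact k \<le> ((n - 1) choose (r - 1)) ^ k" .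
  qed simp
  also have "\<dots> = n * ((n - 1) choose (r - 1)) ^ k * L" by simp
  finally show ?thesis unfolding L_def .
qed

lemma card_Lin_high_degree_le:
  assumes r: "2 \<le> r" and rn: "r \<le> n" and k: "k \<le> m"
    and small: "4 * (m * ((r choose 2) * ((n - 2) choose (r - 2)))) \<le> n choose r"
  shows "real (card {H \<in> Lin r n m. \<exists>v\<in>{1..n}. k \<le> degree H v})
    \<le> real n * (4 / 3 * (real m * real r / real n)) ^ k / fact k * real (card (Lin r n m))"
proof -
  define B where "B = real (card {H \<in> Lin r n m. \<exists>v\<in>{1..n}. k \<le> degree H v})"
  define x where "x = real m * real r / real n"
  define N where "N = real (n choose r)"
  define D where "D = real ((n - 1) choose (r - 1))"
  define L where "L = real (card (Lin r n m))"
  have n0: "0 < real n" using r rn by simp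
  have N0: "0 < N" unfolding N_def using rn by simp
  have D: "real n * D = real r * N"
  proof -
    have "real (r * (n choose r)) = real (n * ((n - 1) choose (r - 1)))"
      using times_binomial_minus1_eq[of r n] r by (simp only:)
    then show ?thesis unfolding D_def N_def by simp
  qed
  have count: "B * fact k \<le> real n * D ^ k * real (card (Lin r n (m - k)))"
    using of_nat_mono[OF card_Lin_high_degree_mult_fact_le[of r n m k]] r unfolding B_def D_def by simp
  have descent: "(3 * N) ^ k * real (card (Lin r n (m - k))) \<le> (4 * real m) ^ k * L"
    using of_nat_mono[OF card_Lin_descent[OF r small k]] unfolding N_def L_def by simp
  have "B * fact k * (3 * N) ^ k \<le> real n * D ^ k * ((3 * N) ^ k * real (card (Lin r n (m - k))))"
    using mult_right_mono[OF count, of "(3 * N) ^ k"] N0 by (simp add: mult_ac)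
  also have "\<dots> \<le> real n * D ^ k * ((4 * real m) ^ k * L)"
    using descent n0 unfolding D_def by (intro mult_left_mono) auto
  also have "\<dots> = real n * (D * (4 * real m)) ^ k * L" by (simp add: power_mult_distrib mult_ac)
  also have "D * (4 * real m) = 4 / 3 * x * (3 * N)"
    using D n0 unfolding x_def by (simp add: field_simps)
  also have "real n * (4 / 3 * x * (3 * N)) ^ k * L = real n * (4 / 3 * x) ^ k * L * (3 * N) ^ k"
    by (simp only: power_mult_distrib mult_ac)
  finally have "B * fact k \<le> real n * (4 / 3 * x) ^ k * L"
    using N0 by (simp add: mult_le_cancel_right_pos)
  then have "B \<le> real n * (4 / 3 * x) ^ k * L / fact k" by (simp add: pos_le_divide_eq)
  then show ?thesis unfolding B_def x_def L_def by simp
qed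

section \<open>The analytic estimate\<close>

lemma pow_div_fact_le_exp:
  fixes x :: real
  assumes "0 \<le> x"
  shows "x ^ k / fact k \<le> exp x"
proof -
  have "(\<lambda>i. x ^ i / fact i) sums exp x"
    using exp_converges[of x] by (simp add: divide_inverse mult.commute)
  then have "(\<Sum>i\<in>{k}. x ^ i / fact i) \<le> exp x"
    using assms by (intro sums_le[OF _ sums_If_finite_set]) auto
  then show ?thesis by simp
qed

lemma pow_div_fact_le:
  fixes y :: real
  assumes "0 < k" "0 \<le> y"
  shows "y ^ k / fact k \<le> (exp 1 * y / real k) ^ k"
proof -
  have "y ^ k / fact k = (y / real k) ^ k * (real k ^ k / fact k)"
    using assms by (simp add: power_divide)
  also have "\<dots> \<le> (y / real k) ^ k * exp (real k)"
    using assms pow_div_fact_le_exp[of "real k" k] by (intro mult_left_mono) auto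
  also have "exp (real k) = exp 1 ^ k" using exp_of_nat_mult[of k 1] by simp
  also have "(y / real k) ^ k * exp 1 ^ k = (exp 1 * y / real k) ^ k"
    by (simp add: power_mult_distrib power_divide)
  finally show ?thesis .
qed

lemma ln_4e_div_243_le: "ln (4 * exp 1 / 243) \<le> (-3 :: real)"
proof -
  have "exp (4::real) = exp 1 ^ 4" using exp_of_nat_mult[of 4 "1::real"] by simp
  then have "4 * exp 1 * exp 3 = 4 * exp (1::real) ^ 4" by (simp add: mult.assoc flip: exp_add)
  also have "\<dots> \<le> 4 * (272 / 100) ^ 4"
    using e_less_272 by (intro mult_left_mono power_mono) auto
  also have "\<dots> \<le> 243" by (simp add: power_numeral_even)
  finally have "4 * exp 1 * exp 3 \<le> (243::real)" .
  then have "4 * exp 1 / 243 \<le> exp (-3 :: real)"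
    by (simp add: exp_minus field_simps)
  then have "ln (4 * exp 1 / 243) \<le> ln (exp (-3 :: real))" by (subst ln_le_cancel_iff) auto
  then show ?thesis by simp
qed

lemma high_degree_tail_le:
  fixes n r k :: nat and x :: real
  assumes r: "3 \<le> r" and nr: "real r ^ 2 \<le> real n" and x: "0 \<le> x"
    and kx: "81 * real r * x \<le> real k" and kL: "ln (real n / real r ^ 2) + 81 \<le> real k"
  shows "real n * (4 / 3 * x) ^ k / fact k \<le> real r ^ 6 / real n ^ 3"
proof -
  define q where "q = 4 * exp 1 / (243 * real r)"
  define a where "a = ln (real r)"
  define L where "L = ln (real n / real r ^ 2)"
  have r0: "0 < real r" using r by simp
  have n0: "0 < real n" using order.strict_trans2[OF zero_less_power[OF r0] nr] .
  have q0: "0 < q" unfolding q_def using r0 by simp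
  have L0: "0 \<le> L" unfolding L_def using nr r0 by simp
  have k0: "0 < k" using kL L0 unfolding L_def by linarith
  have a1: "1 \<le> a"
  proof -
    have "exp 1 \<le> real r" using e_less_272 r by linarith
    then show ?thesis unfolding a_def using ln_ge_iff r0 by blast
  qed
  have ln_n: "ln (real n) = L + 2 * a"
    unfolding L_def a_def using n0 r0 by (simp add: ln_div ln_realpow)
  have ln_q: "ln q \<le> - 3 - a"
    unfolding q_def a_def using r0 ln_4e_div_243_le by (simp add: ln_div ln_mult)
  have "(4 / 3 * x) ^ k / fact k \<le> (exp 1 * (4 / 3 * x) / real k) ^ k"
    using k0 x by (intro pow_div_fact_le) auto
  also have "\<dots> \<le> q ^ k"
    using x k0 kx r0 unfolding q_def by (intro power_mono) (auto simp: field_simps)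
  finally have "real n * (4 / 3 * x) ^ k / fact k \<le> real n * q ^ k"
    using n0 by (simp add: mult_left_mono flip: times_divide_eq_right)
  also have "\<dots> \<le> real r ^ 6 / real n ^ 3"
  proof -
    have "ln (real n * q ^ k) = ln (real n) + real k * ln q"
      using n0 q0 by (simp add: ln_mult ln_realpow)
    also have "\<dots> \<le> ln (real n) + (L + 81) * ln q"
      using kL ln_q a1 unfolding L_def by (intro add_left_mono mult_right_mono_neg) auto
    also have "\<dots> \<le> ln (real n) + (L + 81) * (- 3 - a)"
      using ln_q L0 by (intro add_left_mono mult_left_mono) auto
    also have "\<dots> \<le> 6 * a - 3 * ln (real n)"
      using mult_left_mono[OF a1 L0] a1 L0 unfolding ln_n by (simp add: algebra_simps)
    also have "\<dots> = ln (real r ^ 6 / real n ^ 3)"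
      unfolding a_def using n0 r0 by (simp add: ln_div ln_realpow)
    finally show ?thesis using n0 q0 r0 by simp
  qed
  finally show ?thesis .
qed

lemma four_r_sq_le_n:
  assumes r: "0 < r" and n: "0 < n"
    and m_lower: "real n / real r ^ 2 \<le> real m" and small: "4 * real m * real r ^ 4 \<le> real n ^ 2"
  shows "4 * real r ^ 2 \<le> real n"
proof -
  have lower: "real n \<le> real m * real r ^ 2" using m_lower r by (simp add: field_simps)
  have "real n * (4 * real r ^ 2) \<le> real n * real n"
    using mult_right_mono[OF lower, of "4 * real r ^ 2"] small
    by (simp add: power2_eq_square power4_eq_xxxx mult_ac)
  then show ?thesis using n by simp
qed

lemma M0star_lower_bounds:
  assumes r: "0 < r" and n: "0 < n"
    and m_lower: "real n / real r ^ 2 \<le> real m" and nr: "real r ^ 2 \<le> real n"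
  shows "81 * real r * (real m * real r / real n) \<le> real_of_int (M0star r n m)"
    and "ln (real n / real r ^ 2) + 81 \<le> real_of_int (M0star r n m)"
proof -
  have M: "ln (real n / real r ^ 2) + 81 * (real m * real r ^ 2 / real n) \<le> real_of_int (M0star r n m)"
    unfolding M0star_def by (simp add: mult_ac le_of_int_ceiling)
  have "0 \<le> ln (real n / real r ^ 2)" using nr r by simp
  moreover have "1 \<le> real m * real r ^ 2 / real n" using m_lower r n by (simp add: field_simps)
  moreover have "81 * real r * (real m * real r / real n) = 81 * (real m * real r ^ 2 / real n)"
    by (simp add: power2_eq_square)
  ultimately show "81 * real r * (real m * real r / real n) \<le> real_of_int (M0star r n m)"
    and "ln (real n / real r ^ 2) + 81 \<le> real_of_int (M0star r n m)"
    using M by linarith+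
qed

lemma card_Lin_degree_exceeds_M0star_le:
  assumes r: "3 \<le> r" and n: "2 \<le> n"
    and m_lower: "real n / real r ^ 2 \<le> real m" and small: "4 * real m * real r ^ 4 \<le> real n ^ 2"
  shows "real (card {H \<in> Lin r n m. \<not> (\<forall>v\<in>{1..n}. int (degree H v) \<le> M0star r n m)})
    \<le> real r ^ 6 / real n ^ 3 * real (card (Lin r n m))"
proof -
  define k where "k = nat (M0star r n m + 1)"
  define x where "x = real m * real r / real n"
  have r0: "0 < real r" and n0: "0 < real n" using r n by auto
  have "4 * real r ^ 2 \<le> real n" using four_r_sq_le_n[OF _ _ m_lower small] r n by simp
  then have nr: "real r ^ 2 \<le> real n" using zero_le_power2[of "real r"] by linarith
  have kx: "81 * real r * x \<le> real k" and kL: "ln (real n / real r ^ 2) + 81 \<le> real k"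
    using M0star_lower_bounds[OF _ _ m_lower nr] r n nr r0 unfolding k_def x_def by auto
  have bad: "{H \<in> Lin r n m. \<not> (\<forall>v\<in>{1..n}. int (degree H v) \<le> M0star r n m)}
      = {H \<in> Lin r n m. \<exists>v\<in>{1..n}. k \<le> degree H v}"
  proof -
    have "\<not> int d \<le> M0star r n m \<longleftrightarrow> k \<le> d" for d unfolding k_def nat_le_iff by linarith
    then show ?thesis by auto
  qed
  show ?thesis
  proof (cases "k \<le> m")
    case True
    have "real r \<le> real r ^ 2" using r by (simp add: power2_eq_square)
    then have rn: "r \<le> n" using nr by linarith
    have "real (card {H \<in> Lin r n m. \<exists>v\<in>{1..n}. k \<le> degree H v})
        \<le> real n * (4 / 3 * x) ^ k / fact k * real (card (Lin r n m))"
      unfolding x_def using r rn True overlap_count_le_quarter_choose[of r n m] n small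
      by (intro card_Lin_high_degree_le) auto
    also have "\<dots> \<le> real r ^ 6 / real n ^ 3 * real (card (Lin r n m))"
      using high_degree_tail_le[OF r nr _ kx kL] r0 n0 unfolding x_def by (intro mult_right_mono) auto
    finally show ?thesis unfolding bad .
  next
    case False
    have "degree H v < k" if "H \<in> Lin r n m" for H v
      using that False degree_le_card[OF finite_if_linear_rgraph, of r n H v]
      unfolding Lin_def by simp
    then have none: "{H \<in> Lin r n m. \<exists>v\<in>{1..n}. k \<le> degree H v} = {}"
      using leD by blast
    show ?thesis unfolding bad none by simp
  qed
qed

lemma four_m_r4_le_n_sq:
  assumes n: "0 < n" and r: "0 < r"
    and m_lower: "real n / real r ^ 2 \<le> real m"
    and m_upper: "real m \<le> 1 / 2 * (real n powr (3 / 2) / real r ^ 3)"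
  shows "4 * real m * real r ^ 4 \<le> real n ^ 2"
proof -
  define s where "s = sqrt (real n)"
  have n_s: "real n = s ^ 2" and s0: "0 < s" unfolding s_def using n by auto
  have "real n powr (3 / 2) = real n powr (1 + 1 / 2)" by simp
  also have "\<dots> = real n * s" unfolding s_def using n by (subst powr_add) (simp add: powr_half_sqrt)
  finally have upper: "2 * real r ^ 3 * real m \<le> real n * s"
    using m_upper r by (simp add: field_simps)
  have lower: "real n \<le> real m * real r ^ 2" using m_lower r by (simp add: field_simps)
  have "2 * real r * real n \<le> real n * s"
    using mult_left_mono[OF lower, of "2 * real r"] upper by (simp add: power3_eq_cube power2_eq_square mult_ac)
  then have rs: "2 * real r \<le> s" using n by simp
  have "4 * real m * real r ^ 4 = 2 * real r * (2 * real r ^ 3 * real m)"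
    by (simp add: power4_eq_xxxx power3_eq_cube)
  also have "\<dots> \<le> s * (real n * s)"
    using s0 r by (intro mult_mono[OF rs upper]) auto
  also have "\<dots> = real n ^ 2" unfolding n_s by (simp add: power2_eq_square)
  finally show ?thesis .
qed

theorem theorem4p1:
  fixes r m :: "nat \<Rightarrow> nat"
  assumes r_ge: "\<And>n. r n \<ge> 3"
    and m_lower: "\<And>n. real n / real (r n) ^ 2 \<le> real (m n)"
    and m_upper: "(\<lambda>n. real (m n)) \<in> o(\<lambda>n. real n powr (3/2) / real (r n) ^ 3)"
  shows "\<exists>f :: nat \<Rightarrow> real. f \<in> O(\<lambda>n. real (r n) ^ 6 / real n ^ 3) \<and>
    (\<forall>\<^sub>F n in at_top.
       real (card {H \<in> Lin (r n) n (m n). \<forall>v\<in>{1..n}. int (degree H v) \<le> M0star (r n) n (m n)})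
       = (1 - f n) * real (card (Lin (r n) n (m n))))"
proof -
  define Bad where "Bad n = {H \<in> Lin (r n) n (m n). \<not> (\<forall>v\<in>{1..n}. int (degree H v) \<le> M0star (r n) n (m n))}" for n
  define f where "f n = real (card (Bad n)) / real (card (Lin (r n) n (m n)))" for n
  have "\<forall>\<^sub>F n in at_top. real (m n) \<le> 1 / 2 * (real n powr (3 / 2) / real (r n) ^ 3)"
    using landau_o.smallD[OF m_upper, of "1 / 2"] by simp
  then have "\<forall>\<^sub>F n in at_top. norm (f n) \<le> 1 * norm (real (r n) ^ 6 / real n ^ 3)"
    using eventually_ge_at_top[of "2::nat"]
  proof eventually_elim
    case (elim n)
    have "4 * real (m n) * real (r n) ^ 4 \<le> real n ^ 2"
      using elim(2) r_ge[of n] by (intro four_m_r4_le_n_sq[OF _ _ m_lower elim(1)]) auto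
    then have "real (card (Bad n)) \<le> real (r n) ^ 6 / real n ^ 3 * real (card (Lin (r n) n (m n)))"
      unfolding Bad_def using r_ge m_lower elim(2) by (intro card_Lin_degree_exceeds_M0star_le)
    then have "f n \<le> real (r n) ^ 6 / real n ^ 3"
      unfolding f_def by (cases "card (Lin (r n) n (m n)) = 0") (simp_all add: pos_divide_le_eq)
    then show ?case unfolding f_def by simp
  qed
  then have "f \<in> O(\<lambda>n. real (r n) ^ 6 / real n ^ 3)" by (rule bigoI)
  moreover have "real (card {H \<in> Lin (r n) n (m n). \<forall>v\<in>{1..n}. int (degree H v) \<le> M0star (r n) n (m n)})
       = (1 - f n) * real (card (Lin (r n) n (m n)))" for n
    unfolding f_def Bad_def by (rule card_filter_eq_one_minus_ratio[OF finite_Lin])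
  ultimately show ?thesis by auto
qed

end
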